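(* Given the power cost $P\geq 0$, the MMSE estimation cost for the ZEC coding scheme is \[ S_{\mathsf{ZEC}}(P) = 0, \quad \text{for } P\geq P^*, \] where \[ P^* = \min\{ P: \mathcal{A}^0(P) \neq\varnothing\}. \]
   Context: Setting: causal-encoding, noncausal-decoding vector-valued Witsenhausen counterexample with i.i.d. source $X_0\sim\mathcal{N}(0,Q)$ and channel noise $Z_1\sim\mathcal{N}(0,N)$, $Q,N>0$; state $X_1=X_0+U_1$, channel output $Y_1=X_1+Z_1$; power cost $P=\mathbb{E}[U_1^2]$, estimation cost $S=\mathbb{E}[(X_1-U_2)^2]$. By the single-letter coordination-coding characterization, a cost pair $(P,S)$ is achievable if there are auxiliary random variables $W_1$ (independent of $X_0$) and $W_2$ (depending on $(X_0,W_1)$), both made available to the noncausal decoder, satisfying $I(W_1,W_2;Y_1)-I(W_2;X_0|W_1)\geq 0$, with the decoder using the MMSE estimate $U_2=\mathbb{E}[X_1\mid W_1,W_2,Y_1]$. The ZEC scheme, for parameters $V_1\geq 0$, $a\geq 0$: $W_1\sim\mathcal{N}(0,V_1)$ independent of $X_0$; $W_2=a\cdot\mathrm{sign}(X_0)$; $U_1=W_1+a\cdot\mathrm{sign}(X_0)-X_0$; hence $X_1=W_1+W_2$ and $Y_1=W_1+W_2+Z_1$. Its power cost is $P=V_1+Q+a^2-2a\sqrt{2Q/\pi}$, and the information constraint becomes $h(Y_1)-\tfrac12\log_2(2\pi e N)-1\geq 0$ (in bits). The admissible parameter set is \[ \mathcal{A}^0(P) = \Big\{a\geq 0:\ h(Y_1)-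 \tfrac{1}{2}\log_2(2\pi eN) \geq 1,\ \text{and } V_1 = P - \Big(Q + a^2 - 2a\sqrt{\tfrac{2Q}{\pi}}\Big)\geq 0 \Big\}, \] where $h(Y_1)$ is the differential entropy (in bits) of the Gaussian mixture density \[ f_{Y_1}(y)= \frac{1}{2\sqrt{V_1+N}}\Big[\phi\Big(\tfrac{y-a}{\sqrt{V_1+N}}\Big)+\phi\Big(\tfrac{y+a}{\sqrt{V_1+N}}\Big)\Big], \] with $\phi(x)=\frac{1}{\sqrt{2\pi}}e^{-x^2/2}$ the standard Gaussian density. *)

theory Defs
  imports "HOL-Probability.Probability"
begin

definition phi :: "real \<Rightarrow> real" where
  "phi x = 1 / sqrt (2 * pi) * exp (- x\<^sup>2 / 2)"

text \<open>Density of Y1 = W1 + a sign(X0) + Z1 (Gaussian mixture), with variance V1 of W1 and N of Z1.\<close>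
definition fY :: "real \<Rightarrow> real \<Rightarrow> real \<Rightarrow> real \<Rightarrow> real" where
  "fY N V1 a y = 1 / (2 * sqrt (V1 + N)) *
     (phi ((y - a) / sqrt (V1 + N)) + phi ((y + a) / sqrt (V1 + N)))"

definition hY :: "real \<Rightarrow> real \<Rightarrow> real \<Rightarrow> real" where
  "hY N V1 a = - (LINT y|lborel. fY N V1 a y * log 2 (fY N V1 a y))"

text \<open>Variance of W1 determined by the power constraint P = V1 + Q + a^2 - 2a sqrt(2Q/pi).\<close>
definition V1_of :: "real \<Rightarrow> real \<Rightarrow> real \<Rightarrow> real" where
  "V1_of Q P a = P - (Q + a\<^sup>2 - 2 * a * sqrt (2 * Q / pi))"

definition A0 :: "real \<Rightarrow> real \<Rightarrow> real \<Rightarrow> real set" where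
  "A0 Q N P = {a. a \<ge> 0 \<and>
      hY N (V1_of Q P a) a - 1/2 * log 2 (2 * pi * exp 1 * N) \<ge> 1 \<and>
      V1_of Q P a \<ge> 0}"

text \<open>Underlying probability space: three independent standard Gaussians G0, G1, G2,
  realised as the product measure on ((real \<times> real) \<times> real).\<close>
definition std_gauss :: "real measure" where
  "std_gauss = density lborel std_normal_density"

definition Omega :: "((real \<times> real) \<times> real) measure" where
  "Omega = (std_gauss \<Otimes>\<^sub>M std_gauss) \<Otimes>\<^sub>M std_gauss"

definition X0v :: "real \<Rightarrow> (real \<times> real) \<times> real \<Rightarrow> real" where
  "X0v Q \<omega> = sqrt Q * fst (fst \<omega>)"
definition W1v :: "real \<Rightarrow> (real \<times> real) \<times> real \<Rightarrow> real" where
  "W1v V1 \<omega> = sqrt V1 * snd (fst \<omega>)"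
definition Z1v :: "real \<Rightarrow> (real \<times> real) \<times> real \<Rightarrow> real" where
  "Z1v N \<omega> = sqrt N * snd \<omega>"
definition W2v :: "real \<Rightarrow> real \<Rightarrow> (real \<times> real) \<times> real \<Rightarrow> real" where
  "W2v Q a \<omega> = a * sgn (X0v Q \<omega>)"
definition U1v :: "real \<Rightarrow> real \<Rightarrow> real \<Rightarrow> (real \<times> real) \<times> real \<Rightarrow> real" where
  "U1v Q V1 a \<omega> = W1v V1 \<omega> + a * sgn (X0v Q \<omega>) - X0v Q \<omega>"
definition X1v :: "real \<Rightarrow> real \<Rightarrow> real \<Rightarrow> (real \<times> real) \<times> real \<Rightarrow> real" where
  "X1v Q V1 a \<omega> = X0v Q \<omega> + U1v Q V1 a \<omega>"
definition Y1v :: "real \<Rightarrow> real \<Rightarrow> real \<Rightarrow> real \<Rightarrow> (real \<times> real) \<times> real \<Rightarrow> real" where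
  "Y1v Q N V1 a \<omega> = X1v Q V1 a \<omega> + Z1v N \<omega>"

definition dec_sigma :: "real \<Rightarrow> real \<Rightarrow> real \<Rightarrow> real \<Rightarrow> ((real \<times> real) \<times> real) measure" where
  "dec_sigma Q N V1 a = vimage_algebra (space Omega)
     (\<lambda>\<omega>. (W1v V1 \<omega>, W2v Q a \<omega>, Y1v Q N V1 a \<omega>)) borel"

definition U2v :: "real \<Rightarrow> real \<Rightarrow> real \<Rightarrow> real \<Rightarrow> (real \<times> real) \<times> real \<Rightarrow> real" where
  "U2v Q N V1 a = real_cond_exp Omega (dec_sigma Q N V1 a) (X1v Q V1 a)"

definition est_cost :: "real \<Rightarrow> real \<Rightarrow> real \<Rightarrow> real \<Rightarrow> real" where
  "est_cost Q N V1 a = (LINT \<omega>|Omega. (X1v Q V1 a \<omega> - U2v Q N V1 a \<omega>)\<^sup>2)"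

definition S_ZEC :: "real \<Rightarrow> real \<Rightarrow> real \<Rightarrow> real" where
  "S_ZEC Q N P = (INF a \<in> A0 Q N P. est_cost Q N (V1_of Q P a) a)"

definition P_star :: "real \<Rightarrow> real \<Rightarrow> real" where
  "P_star Q N = Inf {P. A0 Q N P \<noteq> {}}"

end

theory Submission
  imports Defs
begin

text \<open>The decoder observes W1 and W2, and X1 = W1 + W2, so the MMSE estimate is X1 itself and the
  estimation cost vanishes for every choice of parameters. What remains is to see that A0(P) is
  nonempty for P \<ge> P*, so that the infimum defining S_ZEC is not taken over the empty set. By the
  scaling h(tY) = h(Y) + log t, admissibility is preserved when the power is raised; and the least
  admissible power exists because the admissible pairs (V1, a) of bounded power form a compact set on
  which h(Y1) depends continuously.\<close>

section \<open>The decoder recovers the state\<close>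

lemma prob_space_std_gauss: "prob_space std_gauss"
  unfolding std_gauss_def using prob_space_normal_density[of 1 0] by simp

lemma prob_space_Omega: "prob_space Omega"
  unfolding Omega_def using prob_space_std_gauss by (intro prob_space_pair)

lemma sets_std_gauss[measurable_cong]: "sets std_gauss = sets borel"
  by (simp add: std_gauss_def)

lemma integrable_std_gauss: "integrable std_gauss (\<lambda>x. x)"
  unfolding std_gauss_def using integrable_std_normal_moment[of 1]
  by (subst integrable_density) auto

lemma integrable_pair_measure_fst:
  fixes f :: "'a \<Rightarrow> real"
  assumes "prob_space M2" and "integrable M1 f"
  shows "integrable (M1 \<Otimes>\<^sub>M M2) (\<lambda>x. f (fst x))"
proof -
  have "distr (M1 \<Otimes>\<^sub>M M2) M1 fst = M1"
    by (rule prob_space.distr_pair_fst[OF assms(1)])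
  then show ?thesis
    using integrable_distr_eq[of fst "M1 \<Otimes>\<^sub>M M2" M1 f] assms(2) by auto
qed

lemma integrable_pair_measure_snd:
  fixes f :: "'a \<Rightarrow> real"
  assumes "prob_space M1" "prob_space M2" and "integrable M2 f"
  shows "integrable (M1 \<Otimes>\<^sub>M M2) (\<lambda>x. f (snd x))"
proof -
  interpret pair_sigma_finite M1 M2
    using assms(1,2) by (simp add: pair_sigma_finite.intro prob_space_imp_sigma_finite)
  have "integrable (M2 \<Otimes>\<^sub>M M1) (\<lambda>x. f (fst x))"
    using integrable_pair_measure_fst[OF assms(1,3)] .
  then show ?thesis
    using integrable_product_swap_iff[of "\<lambda>x. f (snd x)"] by (simp add: case_prod_unfold)
qed

lemma integrable_X1v: "integrable Omega (X1v Q V1 a)"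
proof -
  interpret prob_space Omega by (rule prob_space_Omega)
  have "integrable Omega (\<lambda>\<omega>. snd (fst \<omega>))"
    unfolding Omega_def
    using prob_space_std_gauss integrable_std_gauss
    by (intro integrable_pair_measure_fst integrable_pair_measure_snd prob_space_pair)
  moreover have "integrable Omega (\<lambda>\<omega>. a * sgn (X0v Q \<omega>))"
  proof (rule integrable_const_bound[where B = "\<bar>a\<bar>"])
    show "AE \<omega> in Omega. norm (a * sgn (X0v Q \<omega>)) \<le> \<bar>a\<bar>"
      by (simp add: abs_mult sgn_real_def)
    show "(\<lambda>\<omega>. a * sgn (X0v Q \<omega>)) \<in> borel_measurable Omega"
      unfolding Omega_def X0v_def by measurable
  qed
  moreover have "X1v Q V1 a = (\<lambda>\<omega>. sqrt V1 * snd (fst \<omega>) + a * sgn (X0v Q \<omega>))"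
    by (auto simp: X1v_def U1v_def W1v_def)
  ultimately show ?thesis by simp
qed

lemma subalgebra_vimage_algebra:
  assumes "g \<in> M \<rightarrow>\<^sub>M N"
  shows "subalgebra M (vimage_algebra (space M) g N)"
  using assms unfolding subalgebra_def measurable_iff_sets by simp

lemma (in sigma_finite_subalgebra) integral_sq_error_real_cond_exp_F_meas:
  assumes "integrable M f" and "f \<in> borel_measurable F"
  shows "(LINT x|M. (f x - real_cond_exp M F f x)\<^sup>2) = 0"
proof -
  have "(LINT x|M. (f x - real_cond_exp M F f x)\<^sup>2) = (LINT x|M. 0)"
  proof (rule integral_cong_AE)
    show "(\<lambda>x. (f x - real_cond_exp M F f x)\<^sup>2) \<in> borel_measurable M"
      using borel_measurable_integrable[OF assms(1)] by measurable
    show "AE x in M. (f x - real_cond_exp M F f x)\<^sup>2 = 0"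
      using real_cond_exp_F_meas[OF assms] by eventually_elim simp
  qed simp
  then show ?thesis by simp
qed

lemma X1v_measurable_dec_sigma: "X1v Q V1 a \<in> borel_measurable (dec_sigma Q N V1 a)"
proof -
  let ?obs = "\<lambda>\<omega>. (W1v V1 \<omega>, W2v Q a \<omega>, Y1v Q N V1 a \<omega>)"
  have "(\<lambda>\<omega>. fst (?obs \<omega>) + fst (snd (?obs \<omega>))) \<in> borel_measurable (dec_sigma Q N V1 a)"
    unfolding dec_sigma_def
    by (rule measurable_compose[OF measurable_vimage_algebra1])
      (simp_all, intro borel_measurable_continuous_onI continuous_intros)
  moreover have "(\<lambda>\<omega>. fst (?obs \<omega>) + fst (snd (?obs \<omega>))) = X1v Q V1 a"
    by (auto simp: X1v_def U1v_def W2v_def)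
  ultimately show ?thesis by simp
qed

lemma est_cost_eq_0: "est_cost Q N V1 a = 0"
proof -
  interpret prob_space Omega by (rule prob_space_Omega)
  have "(\<lambda>\<omega>. (W1v V1 \<omega>, W2v Q a \<omega>, Y1v Q N V1 a \<omega>)) \<in> Omega \<rightarrow>\<^sub>M borel"
    unfolding Omega_def W1v_def W2v_def Y1v_def X1v_def U1v_def X0v_def Z1v_def by measurable
  then interpret finite_measure_subalgebra Omega "dec_sigma Q N V1 a"
    unfolding dec_sigma_def by unfold_locales (rule subalgebra_vimage_algebra)
  show ?thesis
    unfolding est_cost_def U2v_def
    using integral_sq_error_real_cond_exp_F_meas[OF integrable_X1v X1v_measurable_dec_sigma] .
qed

section \<open>Entropy of the channel output\<close>

text \<open>phi_mix m is the density of Y1 / sqrt (V1 + N) for m = a / sqrt (V1 + N).\<close>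

definition phi_mix :: "real \<Rightarrow> real \<Rightarrow> real" where
  "phi_mix m y = (phi (y - m) + phi (y + m)) / 2"

lemma phi_pos: "0 < phi x"
  by (simp add: phi_def)

lemma phi_le_exp: "phi x \<le> exp (- x\<^sup>2 / 2)"
proof -
  have "1 / sqrt (2 * pi) \<le> 1"
    using pi_gt3 by simp
  then show ?thesis
    unfolding phi_def using mult_right_mono[of "1 / sqrt (2 * pi)" 1 "exp (- x\<^sup>2 / 2)"] by simp
qed

lemma ln_phi: "ln (phi x) = - ln (sqrt (2 * pi)) - x\<^sup>2 / 2"
  unfolding phi_def by (simp add: ln_mult ln_div)

lemma phi_mix_pos: "0 < phi_mix m y"
  unfolding phi_mix_def using phi_pos[of "y - m"] phi_pos[of "y + m"] by simp

lemma phi_le_1: "phi x \<le> 1"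
proof -
  have "exp (- x\<^sup>2 / 2) \<le> 1"
    by simp
  then show ?thesis
    using phi_le_exp[of x] by linarith
qed

lemma phi_mix_le_1: "phi_mix m y \<le> 1"
  unfolding phi_mix_def using phi_le_1[of "y - m"] phi_le_1[of "y + m"] by simp

lemma phi_shift_le:
  assumes "\<bar>m\<bar> \<le> M"
  shows "phi (y - m) \<le> exp (M\<^sup>2 / 2) * exp (- y\<^sup>2 / 4)"
proof -
  have "m\<^sup>2 \<le> M\<^sup>2"
    using power_mono[OF assms abs_ge_zero, of 2] by simp
  moreover have "- (y - m)\<^sup>2 / 2 = m\<^sup>2 / 2 - y\<^sup>2 / 4 - (y - 2 * m)\<^sup>2 / 4"
    by (simp add: power2_eq_square field_simps)
  ultimately have "- (y - m)\<^sup>2 / 2 \<le> M\<^sup>2 / 2 + - y\<^sup>2 / 4"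
    using zero_le_power2[of "y - 2 * m"] by linarith
  then have "exp (- (y - m)\<^sup>2 / 2) \<le> exp (M\<^sup>2 / 2) * exp (- y\<^sup>2 / 4)"
    by (simp flip: exp_add)
  then show ?thesis
    using phi_le_exp[of "y - m"] by linarith
qed

lemma phi_mix_le_exp:
  assumes "\<bar>m\<bar> \<le> M"
  shows "phi_mix m y \<le> exp (M\<^sup>2 / 2) * exp (- y\<^sup>2 / 4)"
  using phi_shift_le[OF assms, of y] phi_shift_le[of "- m" M y] assms
  unfolding phi_mix_def by simp

lemma neg_ln_phi_mix_le:
  assumes "\<bar>m\<bar> \<le> M"
  shows "- ln (phi_mix m y) \<le> ln (2 * sqrt (2 * pi)) + y\<^sup>2 + M\<^sup>2"
proof -
  have "phi (y - m) / 2 \<le> phi_mix m y"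
    unfolding phi_mix_def using phi_pos[of "y + m"] by simp
  then have "ln (phi (y - m) / 2) \<le> ln (phi_mix m y)"
    using phi_pos[of "y - m"] by simp
  moreover have "ln (phi (y - m) / 2) = - ln (2 * sqrt (2 * pi)) - (y - m)\<^sup>2 / 2"
    using phi_pos[of "y - m"] by (simp add: ln_div ln_mult ln_phi)
  moreover have "m\<^sup>2 \<le> M\<^sup>2"
    using power_mono[OF assms abs_ge_zero, of 2] by simp
  moreover have "(y - m)\<^sup>2 / 2 \<le> y\<^sup>2 + m\<^sup>2"
    using zero_le_power2[of "y + m"] by (simp add: power2_eq_square algebra_simps)
  ultimately show ?thesis by linarith
qed

definition mix_majorant :: "real \<Rightarrow> real \<Rightarrow> real" where
  "mix_majorant M y = exp (M\<^sup>2 / 2) * exp (- y\<^sup>2 / 4) * (ln (2 * sqrt (2 * pi)) + y\<^sup>2 + M\<^sup>2)"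

lemma abs_phi_mix_ln_le:
  assumes "\<bar>m\<bar> \<le> M"
  shows "\<bar>phi_mix m y * ln (phi_mix m y)\<bar> \<le> mix_majorant M y"
proof -
  have pos: "0 < phi_mix m y"
    by (rule phi_mix_pos)
  have "ln (phi_mix m y) \<le> 0"
    using phi_mix_le_1[of m y] pos by simp
  then have "\<bar>phi_mix m y * ln (phi_mix m y)\<bar> = phi_mix m y * (- ln (phi_mix m y))"
    using pos by (simp add: abs_mult)
  also have "\<dots> \<le> phi_mix m y * (ln (2 * sqrt (2 * pi)) + y\<^sup>2 + M\<^sup>2)"
    using neg_ln_phi_mix_le[OF assms, of y] pos by (intro mult_left_mono) auto
  also have "\<dots> \<le> mix_majorant M y"
  proof -
    have "1 \<le> sqrt (2 * pi)"
      using pi_gt3 by simp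
    then have "0 \<le> ln (2 * sqrt (2 * pi))"
      by (intro ln_ge_zero) linarith
    then show ?thesis
      unfolding mix_majorant_def using phi_mix_le_exp[OF assms, of y]
      by (intro mult_right_mono) auto
  qed
  finally show ?thesis .
qed

lemma integrable_mix_majorant: "integrable lborel (mix_majorant M)"
proof -
  have "exp (- y\<^sup>2 / 4) = sqrt (4 * pi) * normal_density 0 (sqrt 2) y" for y
    by (simp add: normal_density_def real_sqrt_mult)
  then have "mix_majorant M = (\<lambda>y.
      (exp (M\<^sup>2 / 2) * (ln (2 * sqrt (2 * pi)) + M\<^sup>2) * sqrt (4 * pi)) * normal_density 0 (sqrt 2) y
      + (exp (M\<^sup>2 / 2) * sqrt (4 * pi)) * (normal_density 0 (sqrt 2) y * (y - 0) ^ 2))"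
    by (auto simp: mix_majorant_def algebra_simps)
  then show ?thesis
    using integrable_normal_moment[of "sqrt 2" 0 2] by auto
qed

lemma borel_measurable_phi_mix[measurable]: "phi_mix m \<in> borel_measurable borel"
  unfolding phi_mix_def phi_def by measurable

lemma integrable_phi_mix_ln: "integrable lborel (\<lambda>y. phi_mix m y * ln (phi_mix m y))"
proof (rule Bochner_Integration.integrable_bound[OF integrable_mix_majorant[of "\<bar>m\<bar>"]])
  show "AE y in lborel. norm (phi_mix m y * ln (phi_mix m y)) \<le> norm (mix_majorant \<bar>m\<bar> y)"
    using abs_phi_mix_ln_le[of m "\<bar>m\<bar>"] by (auto intro: order_trans abs_ge_self)
qed measurable

lemma phi_mix_eq_normal_density: "phi_mix m y = (normal_density m 1 y + normal_density (- m) 1 y) / 2"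
  by (simp add: phi_mix_def phi_def normal_density_def)

lemma integrable_phi_mix: "integrable lborel (phi_mix m)"
  by (simp add: phi_mix_eq_normal_density[abs_def])

lemma integral_phi_mix: "(LINT y|lborel. phi_mix m y) = 1"
  by (simp add: phi_mix_eq_normal_density integral_divide_zero Bochner_Integration.integral_add)

definition mix_negentropy :: "real \<Rightarrow> real" where
  "mix_negentropy m = (LINT y|lborel. phi_mix m y * ln (phi_mix m y))"

lemma continuous_on_mix_negentropy_interval: "continuous_on {-M..M} mix_negentropy"
proof (rule continuous_on_sequentiallyI)
  fix u m assume u: "\<forall>n. u n \<in> {-M..M}" and lim: "u \<longlonglongrightarrow> m"
  show "(\<lambda>n. mix_negentropy (u n)) \<longlonglongrightarrow> mix_negentropy m"
    unfolding mix_negentropy_def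
  proof (rule integral_dominated_convergence[where w = "mix_majorant M"])
    show "AE y in lborel. (\<lambda>n. phi_mix (u n) y * ln (phi_mix (u n) y))
        \<longlonglongrightarrow> phi_mix m y * ln (phi_mix m y)"
    proof (rule AE_I2)
      fix y
      have "isCont (\<lambda>m. phi_mix m y) m"
        unfolding phi_mix_def phi_def by (intro continuous_intros) auto
      then have "(\<lambda>n. phi_mix (u n) y) \<longlonglongrightarrow> phi_mix m y"
        using isCont_tendsto_compose lim by blast
      then show "(\<lambda>n. phi_mix (u n) y * ln (phi_mix (u n) y)) \<longlonglongrightarrow> phi_mix m y * ln (phi_mix m y)"
        using phi_mix_pos[of m y] by (intro tendsto_intros) auto
    qed
    show "AE y in lborel. norm (phi_mix (u n) y * ln (phi_mix (u n) y)) \<le> mix_majorant M y" for n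
    proof (rule AE_I2)
      fix y
      have "\<bar>u n\<bar> \<le> M"
        using u[rule_format, of n] by (simp add: abs_le_iff)
      then show "norm (phi_mix (u n) y * ln (phi_mix (u n) y)) \<le> mix_majorant M y"
        unfolding real_norm_def by (rule abs_phi_mix_ln_le)
    qed
  qed (simp_all add: integrable_mix_majorant)
qed

lemma isCont_mix_negentropy: "isCont mix_negentropy m"
proof -
  have "m \<in> interior {-(\<bar>m\<bar> + 1)..\<bar>m\<bar> + 1}"
    by auto
  then show ?thesis
    using continuous_on_interior[OF continuous_on_mix_negentropy_interval] by blast
qed

lemma continuous_on_mix_negentropy[continuous_intros]:
  "continuous_on S g \<Longrightarrow> continuous_on S (\<lambda>x. mix_negentropy (g x))"
  using continuous_on_compose2[OF continuous_at_imp_continuous_on, of UNIV mix_negentropy S g]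
    isCont_mix_negentropy by auto

lemma hY_eq_mix_negentropy:
  assumes "0 < V1 + N"
  shows "hY N V1 a = log 2 (sqrt (V1 + N)) - mix_negentropy (a / sqrt (V1 + N)) / ln 2"
proof -
  define s where "s = sqrt (V1 + N)"
  define m where "m = a / s"
  have s: "0 < s"
    using assms by (simp add: s_def)
  have fY_scaled: "fY N V1 a (s * x) = phi_mix m x / s" for x
    unfolding fY_def phi_mix_def m_def s_def[symmetric] using s by (simp add: field_simps)
  have log_fY_scaled: "s * (fY N V1 a (s * x) * log 2 (fY N V1 a (s * x)))
      = phi_mix m x * ln (phi_mix m x) / ln 2 - log 2 s * phi_mix m x" for x
    using phi_mix_pos[of m x] s
    by (simp add: fY_scaled log_def ln_div diff_divide_distrib algebra_simps)
  have "(LINT y|lborel. fY N V1 a y * log 2 (fY N V1 a y))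
      = \<bar>s\<bar> *\<^sub>R (LINT x|lborel. fY N V1 a (0 + s * x) * log 2 (fY N V1 a (0 + s * x)))"
    using s by (intro lborel_integral_real_affine) simp
  also have "\<dots> = (LINT x|lborel. phi_mix m x * ln (phi_mix m x) / ln 2 - log 2 s * phi_mix m x)"
    using s by (simp flip: log_fY_scaled)
  also have "\<dots> = mix_negentropy m / ln 2 - log 2 s"
    using integrable_phi_mix_ln[of m] integrable_phi_mix[of m]
    by (simp add: integral_divide_zero integral_phi_mix mix_negentropy_def)
  finally show ?thesis
    unfolding hY_def m_def s_def by simp
qed

section \<open>Admissible powers\<close>

definition zec_power :: "real \<Rightarrow> real \<Rightarrow> real \<Rightarrow> real" where
  "zec_power Q v a = v + Q + a\<^sup>2 - 2 * a * sqrt (2 * Q / pi)"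

definition entropy_threshold :: "real \<Rightarrow> real" where
  "entropy_threshold N = 1 + 1/2 * log 2 (2 * pi * exp 1 * N)"

definition feasible_pairs :: "real \<Rightarrow> real \<Rightarrow> real \<Rightarrow> (real \<times> real) set" where
  "feasible_pairs Q N P = {(v, a). 0 \<le> v \<and> 0 \<le> a \<and> zec_power Q v a \<le> P \<and>
     entropy_threshold N \<le> hY N v a}"

lemma V1_of_zec_power: "V1_of Q (zec_power Q v a) a = v"
  by (simp add: V1_of_def zec_power_def)

lemma zec_power_V1_of: "zec_power Q (V1_of Q P a) a = P"
  by (simp add: V1_of_def zec_power_def)

lemma mem_A0_iff:
  "a \<in> A0 Q N P \<longleftrightarrow> 0 \<le> a \<and> entropy_threshold N \<le> hY N (V1_of Q P a) a \<and> 0 \<le> V1_of Q P a"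
  unfolding A0_def entropy_threshold_def by auto

lemma hY_scale:
  assumes "0 < v + N" and "0 < t"
  shows "hY N (t\<^sup>2 * (v + N) - N) (t * a) = log 2 t + hY N v a"
proof -
  have "sqrt (t\<^sup>2 * (v + N)) = t * sqrt (v + N)"
    using assms by (simp add: real_sqrt_mult)
  moreover have "t * a / (t * sqrt (v + N)) = a / sqrt (v + N)"
    using assms by simp
  ultimately show ?thesis
    using assms by (simp add: hY_eq_mix_negentropy log_mult)
qed

lemma continuous_on_hY:
  "continuous_on {p. 0 < fst p + N} (\<lambda>p. hY N (fst p) (snd p))"
proof -
  have "continuous_on {p. 0 < fst p + N}
      (\<lambda>p. log 2 (sqrt (fst p + N)) - mix_negentropy (snd p / sqrt (fst p + N)) / ln 2)"
    by (intro continuous_intros) auto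
  then show ?thesis
    by (rule continuous_on_cong[THEN iffD1, rotated 2]) (simp_all add: hY_eq_mix_negentropy)
qed

text \<open>Scaling the pair (V1 + N, a) by (t^2, t) with t \<ge> 1 raises h(Y1) by log t and the
  power continuously and without bound, so every larger power is reached.\<close>
lemma A0_nonempty_mono:
  assumes "0 < N" and "A0 Q N P' \<noteq> {}" and "P' \<le> P"
  shows "A0 Q N P \<noteq> {}"
proof -
  obtain a where "a \<in> A0 Q N P'"
    using assms(2) by blast
  define v where "v = V1_of Q P' a"
  define c where "c = sqrt (2 * Q / pi)"
  have a: "0 \<le> a" and h: "entropy_threshold N \<le> hY N v a" and v: "0 \<le> v"
    using \<open>a \<in> A0 Q N P'\<close> unfolding mem_A0_iff v_def by auto
  define f where "f t = zec_power Q (t\<^sup>2 * (v + N) - N) (t * a)" for t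
  have f1: "f 1 = P'"
    unfolding f_def v_def by (simp add: zec_power_V1_of)
  have f_ge: "t\<^sup>2 * (v + N) - N + Q - c\<^sup>2 \<le> f t" for t
    using zero_le_power2[of "t * a - c"]
    unfolding f_def zec_power_def c_def[symmetric] by (simp add: power2_eq_square algebra_simps)
  define T where "T = 1 + (\<bar>P\<bar> + N + c\<^sup>2 + \<bar>Q\<bar>) / (v + N)"
  have T: "1 \<le> T"
    unfolding T_def using v assms(1) by simp
  have "T * (v + N) \<le> T\<^sup>2 * (v + N)"
    using T v assms(1) by (simp add: power2_eq_square mult_right_mono)
  moreover have "T * (v + N) = v + N + (\<bar>P\<bar> + N + c\<^sup>2 + \<bar>Q\<bar>)"
    unfolding T_def using v assms(1) by (simp add: field_simps)
  ultimately have "P \<le> f T"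
    using f_ge[of T] v assms(1) abs_ge_self[of P] abs_ge_minus_self[of Q] by linarith
  then obtain t where t: "1 \<le> t" and ft: "f t = P"
    using IVT[of f 1 P T] f1 assms(3) T unfolding f_def zec_power_def
    by (auto intro!: continuous_intros)
  have V1: "V1_of Q P (t * a) = t\<^sup>2 * (v + N) - N"
    using ft unfolding f_def by (metis V1_of_zec_power)
  have "v + N \<le> t\<^sup>2 * (v + N)"
    using t v assms(1) by (simp add: one_le_power mult_right_mono[of 1 "t\<^sup>2" "v + N", simplified])
  moreover have "hY N v a \<le> hY N (t\<^sup>2 * (v + N) - N) (t * a)"
    using t v assms(1) by (simp add: hY_scale)
  ultimately have "t * a \<in> A0 Q N P"
    unfolding mem_A0_iff V1 using a h t v by auto
  then show ?thesis by blast
qed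

lemma A0_nonempty_ex:
  assumes "0 < N"
  shows "\<exists>P. A0 Q N P \<noteq> {}"
proof -
  define t where "t = max 1 (2 powr (entropy_threshold N - hY N 0 0))"
  define v where "v = t\<^sup>2 * N - N"
  have t: "1 \<le> t" "0 < t"
    unfolding t_def by auto
  have "entropy_threshold N - hY N 0 0 \<le> log 2 t"
    unfolding t_def by (simp add: le_log_iff)
  then have "entropy_threshold N \<le> hY N v 0"
    using hY_scale[of 0 N t 0] assms t unfolding v_def by simp
  moreover have "0 \<le> v"
    using t assms unfolding v_def by (simp add: one_le_power)
  ultimately have "0 \<in> A0 Q N (zec_power Q v 0)"
    unfolding mem_A0_iff V1_of_zec_power by simp
  then show ?thesis by blast
qed

lemma bounded_feasible_pairs: "bounded (feasible_pairs Q N P)"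
proof -
  define c where "c = sqrt (2 * Q / pi)"
  define B where "B = P - Q + c\<^sup>2"
  have "feasible_pairs Q N P \<subseteq> {0..B} \<times> {0..c + sqrt B}"
  proof
    fix p assume "p \<in> feasible_pairs Q N P"
    then obtain v a where p: "p = (v, a)" and v: "0 \<le> v" and a: "0 \<le> a"
      and power: "v + Q + a\<^sup>2 - 2 * a * c \<le> P"
      unfolding feasible_pairs_def zec_power_def c_def by auto
    have "(a - c)\<^sup>2 = a\<^sup>2 - 2 * a * c + c\<^sup>2"
      by (simp add: power2_diff)
    then have "v \<le> B" and "(a - c)\<^sup>2 \<le> B"
      using power v zero_le_power2[of "a - c"] unfolding B_def by linarith+
    then show "p \<in> {0..B} \<times> {0..c + sqrt B}"
      using p v a real_le_rsqrt[of "a - c" B] by auto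
  qed
  then show ?thesis
    by (rule bounded_subset[rotated]) (intro bounded_Times bounded_closed_interval)
qed

lemma closed_feasible_pairs:
  assumes "0 < N"
  shows "closed (feasible_pairs Q N P)"
proof -
  define D where "D = {p. 0 \<le> fst p \<and> 0 \<le> snd p \<and> zec_power Q (fst p) (snd p) \<le> P}"
  have "closed D"
    unfolding D_def zec_power_def by (intro closed_Collect_conj closed_Collect_le continuous_intros)
  moreover have "continuous_on D (\<lambda>p. hY N (fst p) (snd p))"
    by (rule continuous_on_subset[OF continuous_on_hY]) (auto simp: D_def assms add_nonneg_pos)
  ultimately have "closed (D \<inter> (\<lambda>p. hY N (fst p) (snd p)) -` {entropy_threshold N..})"
    by (intro continuous_closed_preimage) auto
  moreover have "D \<inter> (\<lambda>p. hY N (fst p) (snd p)) -` {entropy_threshold N..} = feasible_pairs Q N P"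
    unfolding D_def feasible_pairs_def by auto
  ultimately show ?thesis
    by simp
qed

lemma A0_least_power_ex:
  assumes "0 < N"
  shows "\<exists>P0. A0 Q N P0 \<noteq> {} \<and> (\<forall>P. A0 Q N P \<noteq> {} \<longrightarrow> P0 \<le> P)"
proof -
  obtain P1 a1 where a1: "a1 \<in> A0 Q N P1"
    using A0_nonempty_ex[OF assms] by blast
  have feasible: "(V1_of Q P a, a) \<in> feasible_pairs Q N P1" if "a \<in> A0 Q N P" "P \<le> P1" for P a
    using that unfolding mem_A0_iff feasible_pairs_def by (simp add: zec_power_V1_of)
  have "compact (feasible_pairs Q N P1)"
    using bounded_feasible_pairs closed_feasible_pairs[OF assms] by (simp add: compact_eq_bounded_closed)
  moreover have "feasible_pairs Q N P1 \<noteq> {}"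
    using feasible[OF a1] by auto
  moreover have "continuous_on (feasible_pairs Q N P1) (\<lambda>p. zec_power Q (fst p) (snd p))"
    unfolding zec_power_def by (intro continuous_intros)
  ultimately have "\<exists>p0 \<in> feasible_pairs Q N P1. \<forall>p \<in> feasible_pairs Q N P1.
      zec_power Q (fst p0) (snd p0) \<le> zec_power Q (fst p) (snd p)"
    by (rule continuous_attains_inf)
  then obtain p0 where p0: "p0 \<in> feasible_pairs Q N P1" and least:
    "\<And>p. p \<in> feasible_pairs Q N P1 \<Longrightarrow> zec_power Q (fst p0) (snd p0) \<le> zec_power Q (fst p) (snd p)"
    by blast
  define P0 where "P0 = zec_power Q (fst p0) (snd p0)"
  have "snd p0 \<in> A0 Q N P0"
    using p0 unfolding feasible_pairs_def mem_A0_iff P0_def by (cases p0) (simp add: V1_of_zec_power)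
  moreover have "P0 \<le> P" if "a \<in> A0 Q N P" for P a
  proof (cases "P \<le> P1")
    case True
    then show ?thesis
      using least[OF feasible[OF that True]] by (simp add: zec_power_V1_of P0_def)
  next
    case False
    then show ?thesis
      using p0 unfolding feasible_pairs_def P0_def by auto
  qed
  ultimately show ?thesis
    by blast
qed

lemma A0_nonempty_iff:
  assumes "0 < N"
  shows "A0 Q N P \<noteq> {} \<longleftrightarrow> P_star Q N \<le> P"
proof -
  obtain P0 where P0: "A0 Q N P0 \<noteq> {}" and least: "\<And>P. A0 Q N P \<noteq> {} \<Longrightarrow> P0 \<le> P"
    using A0_least_power_ex[OF assms] by blast
  have "P_star Q N = P0"
    unfolding P_star_def by (rule cInf_eq_minimum) (use P0 least in auto)
  then show ?thesis
    using least A0_nonempty_mono[OF assms P0] by auto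
qed

theorem theorem3:
  fixes Q N P :: real
  assumes "Q > 0" and "N > 0" and "P \<ge> 0" and "P \<ge> P_star Q N"
  shows "S_ZEC Q N P = 0"
proof -
  have "A0 Q N P \<noteq> {}"
    using A0_nonempty_iff[OF assms(2)] assms(4) by simp
  then show ?thesis
    unfolding S_ZEC_def est_cost_eq_0 by simp
qed

end
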